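(* Let $d\in\mathbb N$ and let $X_1,\dots,X_d$ be arbitrary real-valued random variables on an atomless probability space (no integrability assumed). Then $$X_1+\cdots+X_d\le_{\rm cx} X_1^{\rm co}+\cdots+X_d^{\rm co},$$ where $(X_1^{\rm co},\dots,X_d^{\rm co})$ is a comonotonic version of $(X_1,\dots,X_d)$.
   Context: An expectation $\mathbb E[V]$ is well-defined if $\mathbb E[\max\{V,0\}]<\infty$ or $\mathbb E[\max\{-V,0\}]<\infty$. We write $U\le_{\rm cx}V$ if $\mathbb E[u(U)]\le\mathbb E[u(V)]$ for all convex $u:\mathbb R\to\mathbb R$ such that both expectations are well-defined. A pair $(X,Y)$ is comonotonic if $X=f(Z)$, $Y=g(Z)$ a.s. for some random variable $Z$ and increasing $f,g$; a random vector is comonotonic if each pair of its components is comonotonic. A comonotonic version of $(X_1,\dots,X_d)$ is a comonotonic random vector $(X_1',\dots,X_d')$ with $X_i'$ distributed as $X_i$ for each $i$. *)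

theory Defs
  imports "HOL-Probability.Probability"
begin

definition atomless :: "'a measure \<Rightarrow> bool" where
  "atomless M \<longleftrightarrow> (\<forall>A\<in>sets M. measure M A > 0 \<longrightarrow>
      (\<exists>B\<in>sets M. B \<subseteq> A \<and> 0 < measure M B \<and> measure M B < measure M A))"

definition pos_part_exp :: "'a measure \<Rightarrow> ('a \<Rightarrow> real) \<Rightarrow> ennreal" where
  "pos_part_exp M V = (\<integral>\<^sup>+ x. ennreal (max (V x) 0) \<partial>M)"

definition neg_part_exp :: "'a measure \<Rightarrow> ('a \<Rightarrow> real) \<Rightarrow> ennreal" where
  "neg_part_exp M V = (\<integral>\<^sup>+ x. ennreal (max (- V x) 0) \<partial>M)"

definition exp_well_defined :: "'a measure \<Rightarrow> ('a \<Rightarrow> real) \<Rightarrow> bool" where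
  "exp_well_defined M V \<longleftrightarrow> pos_part_exp M V < \<infinity> \<or> neg_part_exp M V < \<infinity>"

definition ext_expectation :: "'a measure \<Rightarrow> ('a \<Rightarrow> real) \<Rightarrow> ereal" where
  "ext_expectation M V = enn2ereal (pos_part_exp M V) - enn2ereal (neg_part_exp M V)"

definition cx_le :: "'a measure \<Rightarrow> ('a \<Rightarrow> real) \<Rightarrow> ('a \<Rightarrow> real) \<Rightarrow> bool" where
  "cx_le M U V \<longleftrightarrow> (\<forall>u::real \<Rightarrow> real. convex_on UNIV u \<longrightarrow>
      exp_well_defined M (\<lambda>x. u (U x)) \<longrightarrow> exp_well_defined M (\<lambda>x. u (V x)) \<longrightarrow>
      ext_expectation M (\<lambda>x. u (U x)) \<le> ext_expectation M (\<lambda>x. u (V x)))"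

definition comonotonic_pair :: "'a measure \<Rightarrow> ('a \<Rightarrow> real) \<Rightarrow> ('a \<Rightarrow> real) \<Rightarrow> bool" where
  "comonotonic_pair M X Y \<longleftrightarrow> (\<exists>(Z::'a \<Rightarrow> real) (f::real \<Rightarrow> real) (g::real \<Rightarrow> real).
      Z \<in> borel_measurable M \<and> mono f \<and> mono g \<and>
      (AE x in M. X x = f (Z x) \<and> Y x = g (Z x)))"

definition comonotonic_vec :: "'a measure \<Rightarrow> nat \<Rightarrow> (nat \<Rightarrow> 'a \<Rightarrow> real) \<Rightarrow> bool" where
  "comonotonic_vec M d X \<longleftrightarrow> (\<forall>i<d. \<forall>j<d. comonotonic_pair M (X i) (X j))"

definition comonotonic_version ::
    "'a measure \<Rightarrow> nat \<Rightarrow> (nat \<Rightarrow> 'a \<Rightarrow> real) \<Rightarrow> (nat \<Rightarrow> 'a \<Rightarrow> real) \<Rightarrow> bool" where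
  "comonotonic_version M d X Y \<longleftrightarrow>
     (\<forall>i<d. Y i \<in> borel_measurable M \<and> distr M borel (Y i) = distr M borel (X i)) \<and>
     comonotonic_vec M d Y"

end

theory Submission
  imports Defs
begin

text \<open>
  First, \<open>E u(S) \<le> E u(T)\<close> holds for every convex \<open>u\<close> with well-defined
  expectations as soon as \<open>E (S - t)\<^sup>+ \<le> E (T - t)\<^sup>+\<close> and \<open>E (t - S)\<^sup>+ \<le> E (t - T)\<^sup>+\<close> for all
  \<open>t\<close>, no integrability needed: a nonnegative convex function splits at a minimum point into a
  nondecreasing and a nonincreasing convex part, each the pointwise limit from below of constants
  plus nonnegative combinations of hinges \<open>(x - r)\<^sup>+\<close> resp. \<open>(r - x)\<^sup>+\<close> (Fatou), and a general
  \<open>u\<close> is reduced to \<open>max u (-n) + n\<close>.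

  Second, almost surely the values of a comonotonic vector \<open>Y\<close> form a chain for the
  componentwise order, so for every \<open>t\<close> there are thresholds \<open>\<tau>\<^sub>i\<close> with \<open>\<Sum>\<tau>\<^sub>i = t\<close> comparable
  with every point of the chain. Then \<open>(\<Sum>Y\<^sub>i - t)\<^sup>+ = \<Sum>(Y\<^sub>i - \<tau>\<^sub>i)\<^sup>+\<close> a.s., whereas
  \<open>(\<Sum>X\<^sub>i - t)\<^sup>+ \<le> \<Sum>(X\<^sub>i - \<tau>\<^sub>i)\<^sup>+\<close>, and both right-hand sides have the same expectation
  because \<open>X\<^sub>i\<close> and \<open>Y\<^sub>i\<close> have the same law; likewise for \<open>(t - \<Sum>X\<^sub>i)\<^sup>+\<close>.
\<close>

section \<open>Supporting slopes and slope polygons\<close>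

definition supporting_slopes :: "(real \<Rightarrow> real) \<Rightarrow> (real \<Rightarrow> real) \<Rightarrow> bool" where
  "supporting_slopes \<phi> s \<longleftrightarrow> (\<forall>x y. \<phi> x + s x * (y - x) \<le> \<phi> y)"

lemma supporting_slopesD: "supporting_slopes \<phi> s \<Longrightarrow> \<phi> x + s x * (y - x) \<le> \<phi> y"
  by (simp add: supporting_slopes_def)

lemma supporting_slopes_mono:
  assumes "supporting_slopes \<phi> s"
  shows "mono s"
proof (rule monoI)
  fix x y :: real
  assume "x \<le> y"
  have "\<phi> x + s x * (y - x) \<le> \<phi> y" "\<phi> y + s y * (x - y) \<le> \<phi> x"
    using assms by (auto simp: supporting_slopes_def)
  then have "(s x - s y) * (y - x) \<le> 0"
    by (simp add: algebra_simps)
  then show "s x \<le> s y"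
    using \<open>x \<le> y\<close> by (cases "x = y") (auto simp: mult_le_0_iff)
qed

lemma convex_on_supporting_slopes:
  assumes "convex_on UNIV w"
  obtains s where "supporting_slopes w s"
proof
  show "supporting_slopes w (\<lambda>x. Inf ((\<lambda>t. (w x - w t) / (x - t)) ` ({x<..} \<inter> UNIV)))"
    unfolding supporting_slopes_def using convex_le_Inf_differential[OF assms] by auto
qed

lemma supporting_slopes_reflect:
  assumes "supporting_slopes \<phi> s"
  shows "supporting_slopes (\<lambda>y. \<phi> (- y)) (\<lambda>y. - s (- y))"
  unfolding supporting_slopes_def
proof (intro allI)
  fix x y :: real
  show "\<phi> (- x) + - s (- x) * (y - x) \<le> \<phi> (- y)"
    using supporting_slopesD[OF assms, of "- x" "- y"] by (simp add: algebra_simps)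
qed

lemma supporting_slopes_right_of_minimum:
  assumes slopes: "supporting_slopes w s" and min: "\<And>x. w m \<le> w x"
  shows "supporting_slopes (\<lambda>x. w (max x m) - w m) (\<lambda>x. if x \<le> m then 0 else s x)"
    and "0 \<le> (if x \<le> m then 0 else s x)"
proof -
  have s_nonneg: "0 \<le> s x" if "m < x" for x
  proof -
    have "w x + s x * (m - x) \<le> w m"
      using slopes by (rule supporting_slopesD)
    then have "s x * (m - x) \<le> 0"
      using min[of x] by simp
    then show ?thesis
      using that by (simp add: mult_le_0_iff)
  qed
  then show "0 \<le> (if x \<le> m then 0 else s x)"
    by simp
  show "supporting_slopes (\<lambda>x. w (max x m) - w m) (\<lambda>x. if x \<le> m then 0 else s x)"
    unfolding supporting_slopes_def
  proof (intro allI)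
    fix x y
    show "w (max x m) - w m + (if x \<le> m then 0 else s x) * (y - x) \<le> w (max y m) - w m"
    proof (cases "x \<le> m")
      case True
      then show ?thesis using min[of "max y m"] by simp
    next
      case False
      have "w x + s x * (max y m - x) \<le> w (max y m)"
        using slopes by (rule supporting_slopesD)
      moreover have "s x * (y - x) \<le> s x * (max y m - x)"
        using s_nonneg[of x] False by (intro mult_left_mono) auto
      ultimately show ?thesis
        using False by simp
    qed
  qed
qed

lemma supporting_slopes_minimum:
  assumes slopes: "supporting_slopes w s" and cont: "continuous_on UNIV w"
    and "s a < 0" "0 < s b"
  obtains m where "\<And>x. w m \<le> w x"
proof -
  have "a \<le> b"
  proof (rule ccontr)
    assume "\<not> a \<le> b"
    then have "s b \<le> s a"
      using monoD[OF supporting_slopes_mono[OF slopes], of b a] by simp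
    then show False
      using \<open>s a < 0\<close> \<open>0 < s b\<close> by simp
  qed
  then have "\<exists>m\<in>{a..b}. \<forall>x\<in>{a..b}. w m \<le> w x"
    by (intro continuous_attains_inf continuous_on_subset[OF cont]) auto
  then obtain m where m: "m \<in> {a..b}" "\<And>x. x \<in> {a..b} \<Longrightarrow> w m \<le> w x"
    by blast
  have "w m \<le> w x" for x
  proof -
    consider "x < a" | "x \<in> {a..b}" | "b < x"
      by (meson atLeastAtMost_iff not_le)
    then show ?thesis
    proof cases
      case 1
      then have "w a \<le> w a + s a * (x - a)"
        using \<open>s a < 0\<close> by (simp add: mult_nonpos_nonpos)
      then show ?thesis
        using supporting_slopesD[OF slopes, of a x] m(2)[of a] \<open>a \<le> b\<close> by simp
    next
      case 2
      then show ?thesis by (rule m(2))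
    next
      case 3
      then have "w b \<le> w b + s b * (x - b)"
        using \<open>0 < s b\<close> by simp
      then show ?thesis
        using supporting_slopesD[OF slopes, of b x] m(2)[of b] \<open>a \<le> b\<close> by simp
    qed
  qed
  then show ?thesis by (rule that)
qed

text \<open>For increasing \<open>r\<close>: the piecewise linear function that vanishes left of \<open>r 0\<close> and has
  slope \<open>s (r k)\<close> between \<open>r k\<close> and \<open>r (Suc k)\<close>.\<close>
definition slope_polygon :: "(nat \<Rightarrow> real) \<Rightarrow> (real \<Rightarrow> real) \<Rightarrow> nat \<Rightarrow> real \<Rightarrow> real" where
  "slope_polygon r s K x =
     (\<Sum>k\<le>K. (s (r k) - (if k = 0 then 0 else s (r (k - 1)))) * max (x - r k) 0)"

lemma slope_polygon_0: "slope_polygon r s 0 x = s (r 0) * max (x - r 0) 0"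
  by (simp add: slope_polygon_def)

lemma slope_polygon_Suc:
  "slope_polygon r s (Suc K) x = slope_polygon r s K x + (s (r (Suc K)) - s (r K)) * max (x - r (Suc K)) 0"
  by (simp add: slope_polygon_def)

lemma slope_polygon_Suc_left:
  "x \<le> r (Suc K) \<Longrightarrow> slope_polygon r s (Suc K) x = slope_polygon r s K x"
  by (simp add: slope_polygon_Suc)

lemma slope_polygon_left:
  assumes "mono r" "x \<le> r 0"
  shows "slope_polygon r s K x = 0"
proof -
  have "x \<le> r k" for k
    using assms by (meson le0 monoD order_trans)
  then show ?thesis
    by (simp add: slope_polygon_def)
qed

lemma slope_polygon_diff:
  assumes "mono r" "r K \<le> y" "y \<le> x"
  shows "slope_polygon r s K x - slope_polygon r s K y = s (r K) * (x - y)"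
  using assms(2,3)
proof (induction K)
  case 0
  then show ?case by (simp add: slope_polygon_0 algebra_simps)
next
  case (Suc K)
  have "r K \<le> r (Suc K)"
    using assms(1) by (simp add: mono_def)
  with Suc show ?case
    by (simp add: slope_polygon_Suc algebra_simps)
qed

lemma slope_polygon_le:
  assumes "mono r" "supporting_slopes \<phi> s" "r 0 \<le> x"
  shows "slope_polygon r s K x \<le> \<phi> x - \<phi> (r 0)"
  using assms(3)
proof (induction K arbitrary: x)
  case 0
  then show ?case
    using supporting_slopesD[OF assms(2), of "r 0" x] by (simp add: slope_polygon_0)
next
  case (Suc K)
  show ?case
  proof (cases "x \<le> r (Suc K)")
    case True
    then show ?thesis using Suc by (simp add: slope_polygon_Suc_left)
  next
    case False
    have "r K \<le> r (Suc K)" "r 0 \<le> r (Suc K)"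
      using assms(1) by (simp_all add: mono_def)
    then have "slope_polygon r s (Suc K) x
        = slope_polygon r s K (r (Suc K)) + s (r (Suc K)) * (x - r (Suc K))"
      using slope_polygon_diff[OF assms(1), of K "r (Suc K)" x s] False
      by (simp add: slope_polygon_Suc algebra_simps)
    also have "\<dots> \<le> \<phi> x - \<phi> (r 0)"
      using Suc.IH[of "r (Suc K)"] supporting_slopesD[OF assms(2), of "r (Suc K)" x] \<open>r 0 \<le> r (Suc K)\<close>
      by simp
    finally show ?thesis .
  qed
qed

lemma slope_polygon_ge:
  assumes "mono r" "supporting_slopes \<phi> s" and gap: "\<And>k. r (Suc k) - r k \<le> \<delta>"
    and "r 0 \<le> x" "x \<le> r K"
  shows "\<phi> x - \<phi> (r 0) - (s x - s (r 0)) * \<delta> \<le> slope_polygon r s K x"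
  using assms(4,5)
proof (induction K arbitrary: x)
  case 0
  then show ?case by (simp add: slope_polygon_0)
next
  case (Suc K)
  show ?case
  proof (cases "x \<le> r K")
    case True
    then show ?thesis using Suc by (simp add: slope_polygon_Suc_left)
  next
    case False
    have "r 0 \<le> r K"
      using assms(1) by (simp add: mono_def)
    have "s (r K) \<le> s x"
      using supporting_slopes_mono[OF assms(2)] False by (simp add: mono_def)
    moreover have "x - r K \<le> \<delta>"
      using gap[of K] Suc.prems by simp
    ultimately have "(s x - s (r K)) * (x - r K) \<le> (s x - s (r K)) * \<delta>"
      by (intro mult_left_mono) auto
    moreover have "slope_polygon r s K x - slope_polygon r s K (r K) = s (r K) * (x - r K)"
      using slope_polygon_diff[OF assms(1) order_refl] False by simp
    ultimately show ?thesis
      using Suc.IH[of "r K"] \<open>r 0 \<le> r K\<close> supporting_slopesD[OF assms(2), of x "r K"] Suc.prems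
      by (simp add: slope_polygon_Suc_left algebra_simps)
  qed
qed


definition uniform_grid :: "nat \<Rightarrow> nat \<Rightarrow> real" where
  "uniform_grid n k = real k / (real n + 1) - real n"

lemma mono_uniform_grid: "mono (uniform_grid n)"
  unfolding uniform_grid_def by (intro monoI) (auto simp: divide_right_mono)

lemma uniform_grid_0: "uniform_grid n 0 = - real n"
  by (simp add: uniform_grid_def)

lemma uniform_grid_last: "uniform_grid n (2 * n * (n + 1)) = real n"
  by (simp add: uniform_grid_def field_simps)

lemma uniform_grid_Suc: "uniform_grid n (Suc k) - uniform_grid n k = 1 / (real n + 1)"
  by (simp add: uniform_grid_def field_simps)

lemma tendsto_slope_polygon_grid:
  fixes \<phi> s :: "real \<Rightarrow> real"
  assumes slopes: "supporting_slopes \<phi> s" and "\<And>x. 0 \<le> s x"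
    and lim: "(\<lambda>n. \<phi> (- real n)) \<longlonglongrightarrow> L"
  shows "(\<lambda>n. L + slope_polygon (uniform_grid n) s (2 * n * (n + 1)) x) \<longlonglongrightarrow> \<phi> x"
proof (rule tendsto_sandwich)
  have gap: "uniform_grid n (Suc k) - uniform_grid n k \<le> 1 / (real n + 1)" for n k
    by (simp add: uniform_grid_Suc)
  obtain N :: nat where N: "\<bar>x\<bar> \<le> real N"
    using real_arch_simple by blast
  have x_in_grid: "uniform_grid n 0 \<le> x" "x \<le> uniform_grid n (2 * n * (n + 1))" if "N \<le> n" for n
    unfolding uniform_grid_0 uniform_grid_last using that N by auto
  show "\<forall>\<^sub>F n in sequentially. \<phi> x - \<phi> (- real n) + L - s x * (1 / (real n + 1))
      \<le> L + slope_polygon (uniform_grid n) s (2 * n * (n + 1)) x"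
  proof (rule eventually_sequentiallyI)
    fix n assume "N \<le> n"
    have "(s x - s (uniform_grid n 0)) * (1 / (real n + 1)) \<le> s x * (1 / (real n + 1))"
      using \<open>0 \<le> s (uniform_grid n 0)\<close> by (intro mult_right_mono) auto
    then show "\<phi> x - \<phi> (- real n) + L - s x * (1 / (real n + 1))
        \<le> L + slope_polygon (uniform_grid n) s (2 * n * (n + 1)) x"
      using slope_polygon_ge[OF mono_uniform_grid slopes gap x_in_grid[OF \<open>N \<le> n\<close>]] uniform_grid_0 by simp
  qed
  show "\<forall>\<^sub>F n in sequentially. L + slope_polygon (uniform_grid n) s (2 * n * (n + 1)) x \<le> \<phi> x - \<phi> (- real n) + L"
    using slope_polygon_le[OF mono_uniform_grid slopes x_in_grid(1)] uniform_grid_0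
    by (intro eventually_sequentiallyI[of N]) (simp add: algebra_simps)
  have "(\<lambda>n. 1 / (real n + 1)) \<longlonglongrightarrow> 0"
    using LIMSEQ_inverse_real_of_nat by (simp add: inverse_eq_divide add.commute)
  then have "(\<lambda>n. \<phi> x - \<phi> (- real n) + L - s x * (1 / (real n + 1))) \<longlonglongrightarrow> \<phi> x - L + L - s x * 0"
    by (intro tendsto_intros lim)
  then show "(\<lambda>n. \<phi> x - \<phi> (- real n) + L - s x * (1 / (real n + 1))) \<longlonglongrightarrow> \<phi> x"
    by simp
  have "(\<lambda>n. \<phi> x - \<phi> (- real n) + L) \<longlonglongrightarrow> \<phi> x - L + L"
    by (intro tendsto_intros lim)
  then show "(\<lambda>n. \<phi> x - \<phi> (- real n) + L) \<longlonglongrightarrow> \<phi> x"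
    by simp
qed

section \<open>Stop-loss order and convex order\<close>

definition stop_loss_le :: "'a measure \<Rightarrow> ('a \<Rightarrow> real) \<Rightarrow> ('a \<Rightarrow> real) \<Rightarrow> bool" where
  "stop_loss_le M S T \<longleftrightarrow>
     (\<forall>t. (\<integral>\<^sup>+x. ennreal (max (S x - t) 0) \<partial>M) \<le> (\<integral>\<^sup>+x. ennreal (max (T x - t) 0) \<partial>M))"

lemma nn_integral_mono_slope_polygon:
  assumes [measurable]: "S \<in> borel_measurable M" "T \<in> borel_measurable M"
    and "stop_loss_le M S T" "mono r" "mono s" "\<And>x. 0 \<le> s x" "0 \<le> c"
  shows "(\<integral>\<^sup>+x. ennreal (c + slope_polygon r s K (S x)) \<partial>M)
       \<le> (\<integral>\<^sup>+x. ennreal (c + slope_polygon r s K (T x)) \<partial>M)"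
proof -
  define a where "a k = s (r k) - (if k = 0 then 0 else s (r (k - 1)))" for k
  have a_nonneg: "0 \<le> a k" for k
    using assms(4-6) by (auto simp: a_def mono_def)
  have integral_eq: "(\<integral>\<^sup>+x. ennreal (c + slope_polygon r s K (U x)) \<partial>M)
      = (\<integral>\<^sup>+x. ennreal c \<partial>M) + (\<Sum>k\<le>K. ennreal (a k) * (\<integral>\<^sup>+x. ennreal (max (U x - r k) 0) \<partial>M))"
    if [measurable]: "U \<in> borel_measurable M" for U
  proof -
    have "ennreal (c + slope_polygon r s K y)
        = ennreal c + (\<Sum>k\<le>K. ennreal (a k) * ennreal (max (y - r k) 0))" for y
      using \<open>0 \<le> c\<close> a_nonneg
      by (simp add: slope_polygon_def a_def[symmetric] ennreal_plus sum_nonneg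
          ennreal_mult flip: sum_ennreal)
    then show ?thesis
      by (simp add: nn_integral_add nn_integral_sum nn_integral_cmult)
  qed
  show ?thesis
    unfolding integral_eq[OF assms(1)] integral_eq[OF assms(2)]
    using assms(3) by (intro add_left_mono sum_mono mult_left_mono) (auto simp: stop_loss_le_def)
qed

lemma nn_integral_mono_nondecreasing_convex:
  assumes [measurable]: "S \<in> borel_measurable M" "T \<in> borel_measurable M"
    and "stop_loss_le M S T" and slopes: "supporting_slopes \<phi> s"
    and s_nonneg: "\<And>x. 0 \<le> s x" and \<phi>_nonneg: "\<And>x. 0 \<le> \<phi> x"
  shows "(\<integral>\<^sup>+x. ennreal (\<phi> (S x)) \<partial>M) \<le> (\<integral>\<^sup>+x. ennreal (\<phi> (T x)) \<partial>M)"
proof -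
  define L where "L = (INF n. \<phi> (- real n))"
  define Q where "Q n x = L + slope_polygon (uniform_grid n) s (2 * n * (n + 1)) x" for n x
  have \<phi>_mono: "\<phi> x \<le> \<phi> y" if "x \<le> y" for x y
    using supporting_slopesD[OF slopes, of x y] s_nonneg[of x] that
    by (smt (verit) mult_nonneg_nonneg)
  have bdd: "bdd_below (range (\<lambda>n. \<phi> (- real n)))"
    using \<phi>_nonneg by (intro bdd_belowI[of _ 0]) auto
  have "(\<lambda>n. \<phi> (- real n)) \<longlonglongrightarrow> L"
    unfolding L_def using bdd \<phi>_mono by (intro LIMSEQ_decseq_INF) (auto simp: decseq_def)
  then have Q_lim: "(\<lambda>n. Q n x) \<longlonglongrightarrow> \<phi> x" for x
    unfolding Q_def using tendsto_slope_polygon_grid[OF slopes s_nonneg] by blast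
  have L_le: "L \<le> \<phi> x" for x
  proof -
    obtain n :: nat where "- x \<le> real n"
      using real_arch_simple by blast
    then have "L \<le> \<phi> (- real n)" "\<phi> (- real n) \<le> \<phi> x"
      unfolding L_def using bdd \<phi>_mono by (auto intro: cINF_lower)
    then show ?thesis by simp
  qed
  have Q_le: "Q n x \<le> \<phi> x" for n x
  proof (cases "x \<le> uniform_grid n 0")
    case True
    then show ?thesis
      using slope_polygon_left[OF mono_uniform_grid True] L_le by (simp add: Q_def)
  next
    case False
    then show ?thesis
      using slope_polygon_le[OF mono_uniform_grid slopes, of n x "2 * n * (n + 1)"] L_le[of "uniform_grid n 0"]
      unfolding Q_def by linarith
  qed
  have L_nonneg: "0 \<le> L"
    unfolding L_def using \<phi>_nonneg by (intro cINF_greatest) auto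
  have "(\<integral>\<^sup>+x. ennreal (\<phi> (S x)) \<partial>M) = (\<integral>\<^sup>+x. liminf (\<lambda>n. ennreal (Q n (S x))) \<partial>M)"
    by (intro nn_integral_cong lim_imp_Liminf[symmetric] tendsto_ennrealI Q_lim) auto
  also have "\<dots> \<le> liminf (\<lambda>n. \<integral>\<^sup>+x. ennreal (Q n (S x)) \<partial>M)"
    by (intro nn_integral_liminf) (simp add: Q_def slope_polygon_def)
  also have "\<dots> \<le> liminf (\<lambda>n. \<integral>\<^sup>+x. ennreal (Q n (T x)) \<partial>M)"
    unfolding Q_def using assms(3) supporting_slopes_mono[OF slopes] s_nonneg L_nonneg mono_uniform_grid
    by (intro Liminf_mono always_eventually allI nn_integral_mono_slope_polygon) auto
  also have "\<dots> \<le> (\<integral>\<^sup>+x. ennreal (\<phi> (T x)) \<partial>M)"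
    by (intro Liminf_le always_eventually allI nn_integral_mono ennreal_leI Q_le) auto
  finally show ?thesis .
qed

lemma nn_integral_mono_convex_at_minimum:
  assumes [measurable]: "S \<in> borel_measurable M" "T \<in> borel_measurable M" "w \<in> borel_measurable borel"
    and upper: "stop_loss_le M S T" and lower: "stop_loss_le M (\<lambda>x. - S x) (\<lambda>x. - T x)"
    and slopes: "supporting_slopes w s" and min: "\<And>x. w m \<le> w x" and "0 \<le> w m"
  shows "(\<integral>\<^sup>+x. ennreal (w (S x)) \<partial>M) \<le> (\<integral>\<^sup>+x. ennreal (w (T x)) \<partial>M)"
proof -
  define \<phi> where "\<phi> x = w (max x m) - w m" for x
  define \<psi> where "\<psi> y = w (- max y (- m)) - w m" for y
  have \<phi>: "supporting_slopes \<phi> (\<lambda>x. if x \<le> m then 0 else s x)" "0 \<le> (if x \<le> m then 0 else s x)" for x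
    unfolding \<phi>_def using supporting_slopes_right_of_minimum[OF slopes min] by auto
  have \<psi>: "supporting_slopes \<psi> (\<lambda>y. if y \<le> - m then 0 else - s (- y))"
    "0 \<le> (if y \<le> - m then 0 else - s (- y))" for y
    unfolding \<psi>_def using supporting_slopes_right_of_minimum[OF supporting_slopes_reflect[OF slopes], of "- m"] min
    by auto
  have \<phi>_nonneg: "0 \<le> \<phi> y" and \<psi>_nonneg: "0 \<le> \<psi> y" for y
    using min by (auto simp: \<phi>_def \<psi>_def)
  have [measurable]: "\<phi> \<in> borel_measurable borel" "\<psi> \<in> borel_measurable borel"
    unfolding \<phi>_def \<psi>_def by measurable
  have split: "(\<integral>\<^sup>+x. ennreal (w (U x)) \<partial>M)
      = (\<integral>\<^sup>+x. ennreal (w m) \<partial>M) + (\<integral>\<^sup>+x. ennreal (\<phi> (U x)) \<partial>M) + (\<integral>\<^sup>+x. ennreal (\<psi> (- U x)) \<partial>M)"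
    if [measurable]: "U \<in> borel_measurable M" for U
  proof -
    have "w m + \<phi> y + \<psi> (- y) = w y" for y
      by (auto simp: \<phi>_def \<psi>_def max_def)
    then have pointwise: "ennreal (w y) = ennreal (w m) + ennreal (\<phi> y) + ennreal (\<psi> (- y))" for y
      using \<open>0 \<le> w m\<close> \<phi>_nonneg \<psi>_nonneg by (simp del: ennreal_plus add: ennreal_plus[symmetric])
    have "(\<integral>\<^sup>+x. ennreal (w (U x)) \<partial>M)
        = (\<integral>\<^sup>+x. ennreal (w m) + ennreal (\<phi> (U x)) + ennreal (\<psi> (- U x)) \<partial>M)"
      by (intro nn_integral_cong pointwise)
    also have "\<dots> = (\<integral>\<^sup>+x. ennreal (w m) \<partial>M) + (\<integral>\<^sup>+x. ennreal (\<phi> (U x)) \<partial>M)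
        + (\<integral>\<^sup>+x. ennreal (\<psi> (- U x)) \<partial>M)"
      by (simp add: nn_integral_add del: ennreal_plus)
    finally show ?thesis .
  qed
  have "(\<integral>\<^sup>+x. ennreal (\<phi> (S x)) \<partial>M) \<le> (\<integral>\<^sup>+x. ennreal (\<phi> (T x)) \<partial>M)"
    using \<phi>_nonneg by (intro nn_integral_mono_nondecreasing_convex[OF _ _ upper \<phi>]) auto
  moreover have "(\<integral>\<^sup>+x. ennreal (\<psi> (- S x)) \<partial>M) \<le> (\<integral>\<^sup>+x. ennreal (\<psi> (- T x)) \<partial>M)"
    using \<psi>_nonneg by (intro nn_integral_mono_nondecreasing_convex[OF _ _ lower \<psi>]) auto
  ultimately show ?thesis
    unfolding split[OF assms(1)] split[OF assms(2)] by (intro add_mono) auto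
qed

lemma nn_integral_mono_convex:
  assumes [measurable]: "S \<in> borel_measurable M" "T \<in> borel_measurable M"
    and upper: "stop_loss_le M S T" and lower: "stop_loss_le M (\<lambda>x. - S x) (\<lambda>x. - T x)"
    and convex: "convex_on UNIV w" and w_nonneg: "\<And>x. 0 \<le> w x"
  shows "(\<integral>\<^sup>+x. ennreal (w (S x)) \<partial>M) \<le> (\<integral>\<^sup>+x. ennreal (w (T x)) \<partial>M)"
proof -
  obtain s where slopes: "supporting_slopes w s"
    using convex_on_supporting_slopes[OF convex] by blast
  have cont: "continuous_on UNIV w"
    by (rule convex_on_continuous[OF open_UNIV convex])
  consider "\<And>x. 0 \<le> s x" | "\<And>x. s x \<le> 0" | a b where "s a < 0" "0 < s b"
    by (meson not_le)
  then show ?thesis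
  proof cases
    case 1
    then show ?thesis
      using nn_integral_mono_nondecreasing_convex[OF assms(1,2) upper slopes] w_nonneg by blast
  next
    case 2
    have "(\<integral>\<^sup>+x. ennreal (w (- (- S x))) \<partial>M) \<le> (\<integral>\<^sup>+x. ennreal (w (- (- T x))) \<partial>M)"
      using 2 w_nonneg
      by (intro nn_integral_mono_nondecreasing_convex[OF _ _ lower supporting_slopes_reflect[OF slopes]]) auto
    then show ?thesis
      by simp
  next
    case 3
    obtain m where "\<And>x. w m \<le> w x"
      using supporting_slopes_minimum[OF slopes cont 3] by blast
    then show ?thesis
      using borel_measurable_continuous_onI[OF cont] w_nonneg
      by (intro nn_integral_mono_convex_at_minimum[OF assms(1,2) _ upper lower slopes]) auto
  qed
qed

lemma convex_on_max:
  assumes "convex_on A f" "convex_on A g"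
  shows "convex_on A (\<lambda>x. max (f x) (g x))"
  unfolding convex_on_def
proof (intro conjI ballI allI impI)
  show "convex A"
    using assms(1) by (simp add: convex_on_def)
  fix x y and a b :: real
  assume xy: "x \<in> A" "y \<in> A" and ab: "0 \<le> a" "0 \<le> b" "a + b = 1"
  have "f (a *\<^sub>R x + b *\<^sub>R y) \<le> a * f x + b * f y" "g (a *\<^sub>R x + b *\<^sub>R y) \<le> a * g x + b * g y"
    using assms xy ab by (auto simp: convex_on_def)
  moreover have "a * f x + b * f y \<le> a * max (f x) (g x) + b * max (f y) (g y)"
    "a * g x + b * g y \<le> a * max (f x) (g x) + b * max (f y) (g y)"
    using ab by (intro add_mono mult_left_mono; simp)+
  ultimately show "max (f (a *\<^sub>R x + b *\<^sub>R y)) (g (a *\<^sub>R x + b *\<^sub>R y))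
      \<le> a * max (f x) (g x) + b * max (f y) (g y)"
    by simp
qed

lemma (in prob_space) nn_integral_truncation:
  assumes [measurable]: "V \<in> borel_measurable M" and "0 \<le> c"
  shows "(\<integral>\<^sup>+x. ennreal (max (V x) (- c) + c) \<partial>M) + (\<integral>\<^sup>+x. ennreal (min (max (- V x) 0) c) \<partial>M)
       = pos_part_exp M V + ennreal c"
proof -
  have pointwise: "ennreal (max v (- c) + c) + ennreal (min (max (- v) 0) c) = ennreal (max v 0) + ennreal c"
    for v :: real
  proof -
    have "ennreal (max v (- c) + c) + ennreal (min (max (- v) 0) c)
        = ennreal (max v (- c) + c + min (max (- v) 0) c)"
      using \<open>0 \<le> c\<close> by (intro ennreal_plus[symmetric]) auto
    also have "max v (- c) + c + min (max (- v) 0) c = max v 0 + c"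
      using \<open>0 \<le> c\<close> by (auto simp: max_def min_def)
    also have "ennreal (max v 0 + c) = ennreal (max v 0) + ennreal c"
      using \<open>0 \<le> c\<close> by (intro ennreal_plus) auto
    finally show ?thesis .
  qed
  have "(\<integral>\<^sup>+x. ennreal (max (V x) (- c) + c) \<partial>M) + (\<integral>\<^sup>+x. ennreal (min (max (- V x) 0) c) \<partial>M)
      = (\<integral>\<^sup>+x. ennreal (max (V x) 0) + ennreal c \<partial>M)"
    by (simp add: nn_integral_add[symmetric] pointwise del: ennreal_plus)
  also have "\<dots> = pos_part_exp M V + ennreal c"
    by (simp add: pos_part_exp_def nn_integral_add emeasure_space_1 del: ennreal_plus)
  finally show ?thesis .
qed

lemma neg_part_exp_eq_SUP:
  assumes [measurable]: "V \<in> borel_measurable M"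
  shows "neg_part_exp M V = (SUP n. \<integral>\<^sup>+x. ennreal (min (max (- V x) 0) (real n)) \<partial>M)"
proof -
  have "ennreal (max (- v) 0) = (SUP n. ennreal (min (max (- v) 0) (real n)))" for v :: real
  proof (rule antisym)
    obtain n :: nat where "max (- v) 0 \<le> real n"
      using real_arch_simple by blast
    then show "ennreal (max (- v) 0) \<le> (SUP n. ennreal (min (max (- v) 0) (real n)))"
      by (intro SUP_upper2[of n]) auto
    show "(SUP n. ennreal (min (max (- v) 0) (real n))) \<le> ennreal (max (- v) 0)"
      by (intro SUP_least ennreal_leI) auto
  qed
  then have "neg_part_exp M V = (\<integral>\<^sup>+x. (SUP n. ennreal (min (max (- V x) 0) (real n))) \<partial>M)"
    unfolding neg_part_exp_def by presburger
  also have "\<dots> = (SUP n. \<integral>\<^sup>+x. ennreal (min (max (- V x) 0) (real n)) \<partial>M)"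
    by (rule nn_integral_monotone_convergence_SUP)
      (auto simp: incseq_def le_fun_def intro!: ennreal_leI min.mono)
  finally show ?thesis .
qed

lemma enn2ereal_diff_le_diff:
  fixes a b c d :: ennreal
  assumes "a + d \<le> c + b" "a \<noteq> \<top> \<or> b \<noteq> \<top>" "c \<noteq> \<top> \<or> d \<noteq> \<top>"
  shows "enn2ereal a - enn2ereal b \<le> enn2ereal c - enn2ereal d"
  using assms by (cases a; cases b; cases c; cases d) (auto simp: top_unique simp flip: ennreal_plus)

lemma (in prob_space) ext_expectation_mono_convex:
  assumes [measurable]: "S \<in> borel_measurable M" "T \<in> borel_measurable M"
    and upper: "stop_loss_le M S T" and lower: "stop_loss_le M (\<lambda>x. - S x) (\<lambda>x. - T x)"
    and convex: "convex_on UNIV u"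
    and "exp_well_defined M (\<lambda>x. u (S x))" "exp_well_defined M (\<lambda>x. u (T x))"
  shows "ext_expectation M (\<lambda>x. u (S x)) \<le> ext_expectation M (\<lambda>x. u (T x))"
proof -
  have [measurable]: "u \<in> borel_measurable borel"
    by (intro borel_measurable_continuous_onI convex_on_continuous[OF open_UNIV convex])
  define p where "p V = pos_part_exp M (\<lambda>x. u (V x))" for V
  define a where "a V n = (\<integral>\<^sup>+x. ennreal (min (max (- u (V x)) 0) (real n)) \<partial>M)" for V n
  have truncated: "p S + a T n \<le> p T + a S n" for n
  proof -
    define w where "w y = max (u y) (- real n) + real n" for y
    have "convex_on UNIV w"
      unfolding w_def by (intro convex_on_add convex_on_max convex convex_on_const[THEN iffD2]) auto
    then have w_le: "(\<integral>\<^sup>+x. ennreal (w (S x)) \<partial>M) \<le> (\<integral>\<^sup>+x. ennreal (w (T x)) \<partial>M)"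
      by (rule nn_integral_mono_convex[OF assms(1,2) upper lower]) (simp add: w_def)
    have split: "(\<integral>\<^sup>+x. ennreal (w (V x)) \<partial>M) + a V n = p V + ennreal (real n)"
      if [measurable]: "V \<in> borel_measurable M" for V
      unfolding w_def a_def p_def by (rule nn_integral_truncation) auto
    have "p S + a T n + ennreal (real n) = (\<integral>\<^sup>+x. ennreal (w (S x)) \<partial>M) + (a S n + a T n)"
      using split[OF assms(1)] by (simp add: ac_simps)
    also have "\<dots> \<le> (\<integral>\<^sup>+x. ennreal (w (T x)) \<partial>M) + (a S n + a T n)"
      using w_le by (rule add_right_mono)
    also have "\<dots> = p T + a S n + ennreal (real n)"
      using split[OF assms(2)] by (simp add: ac_simps)
    finally have "ennreal (real n) + (p S + a T n) \<le> ennreal (real n) + (p T + a S n)"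
      by (simp add: ac_simps)
    then show ?thesis
      by (simp add: ennreal_add_left_cancel_le)
  qed
  have "p S + neg_part_exp M (\<lambda>x. u (T x)) = (SUP n. p S + a T n)"
    unfolding a_def by (simp add: neg_part_exp_eq_SUP ennreal_SUP_add_right)
  also have "\<dots> \<le> p T + neg_part_exp M (\<lambda>x. u (S x))"
  proof (rule SUP_least)
    fix n
    have "a S n \<le> neg_part_exp M (\<lambda>x. u (S x))"
      unfolding a_def neg_part_exp_def by (intro nn_integral_mono ennreal_leI) auto
    then show "p S + a T n \<le> p T + neg_part_exp M (\<lambda>x. u (S x))"
      using truncated[of n] by (meson add_left_mono order_trans)
  qed
  finally show ?thesis
    using assms(6,7) unfolding ext_expectation_def exp_well_defined_def p_def
    by (intro enn2ereal_diff_le_diff) auto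
qed

section \<open>Comonotonic sums\<close>

definition coordinatewise_chain :: "nat \<Rightarrow> (nat \<Rightarrow> 'a \<Rightarrow> real) \<Rightarrow> 'a set \<Rightarrow> bool" where
  "coordinatewise_chain d y G \<longleftrightarrow>
     (\<forall>\<omega>\<in>G. \<forall>\<omega>'\<in>G. (\<forall>i<d. y i \<omega> \<le> y i \<omega>') \<or> (\<forall>i<d. y i \<omega>' \<le> y i \<omega>))"

lemma coordinatewise_chain_subset:
  "coordinatewise_chain d y G \<Longrightarrow> A \<subseteq> G \<Longrightarrow> coordinatewise_chain d y A"
  by (auto simp: coordinatewise_chain_def)

lemma coordinatewise_chain_uminus:
  "coordinatewise_chain d y G \<Longrightarrow> coordinatewise_chain d (\<lambda>i \<omega>. - y i \<omega>) G"
  by (auto simp: coordinatewise_chain_def)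

lemma coordinatewise_chain_le_of_sum_le:
  assumes chain: "coordinatewise_chain d y G" and "\<omega> \<in> G" "\<omega>' \<in> G"
    and sum_le: "(\<Sum>i<d. y i \<omega>) \<le> (\<Sum>i<d. y i \<omega>')" and "i < d"
  shows "y i \<omega> \<le> y i \<omega>'"
proof (cases "\<forall>i<d. y i \<omega> \<le> y i \<omega>'")
  case False
  then have ge: "\<forall>j<d. y j \<omega>' \<le> y j \<omega>"
    using chain \<open>\<omega> \<in> G\<close> \<open>\<omega>' \<in> G\<close> by (auto simp: coordinatewise_chain_def)
  then have "(\<Sum>j<d. y j \<omega>') \<le> (\<Sum>j<d. y j \<omega>)"
    by (intro sum_mono) auto
  with sum_le have "(\<Sum>j<d. y j \<omega> - y j \<omega>') = 0"
    by (simp add: sum_subtractf)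
  then have "\<forall>j<d. y j \<omega> - y j \<omega>' = 0"
    using ge by (subst (asm) sum_nonneg_eq_0_iff) auto
  then show ?thesis
    using \<open>i < d\<close> by simp
qed (use \<open>i < d\<close> in auto)

lemma coordinatewise_chain_finite_greatest:
  assumes "coordinatewise_chain d y G" "finite F" "F \<noteq> {}" "F \<subseteq> G"
  shows "\<exists>\<omega>\<in>F. \<forall>\<omega>'\<in>F. \<forall>i<d. y i \<omega>' \<le> y i \<omega>"
  using assms(2-4)
proof (induction F rule: finite_ne_induct)
  case (singleton \<omega>)
  then show ?case by simp
next
  case (insert \<omega> F)
  then obtain \<omega>0 where \<omega>0: "\<omega>0 \<in> F" "\<forall>\<omega>'\<in>F. \<forall>i<d. y i \<omega>' \<le> y i \<omega>0"
    by auto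
  consider "\<forall>i<d. y i \<omega> \<le> y i \<omega>0" | "\<forall>i<d. y i \<omega>0 \<le> y i \<omega>"
    using assms(1) insert.prems \<omega>0(1) by (auto simp: coordinatewise_chain_def)
  then show ?case
  proof cases
    case 1
    then show ?thesis using \<omega>0 by auto
  next
    case 2
    then show ?thesis using \<omega>0 by (auto intro: order_trans)
  qed
qed

lemma coordinatewise_chain_bdd_above:
  assumes chain: "coordinatewise_chain d y A" and "\<omega>0 \<in> A"
    and sum_le: "\<And>\<omega>. \<omega> \<in> A \<Longrightarrow> (\<Sum>i<d. y i \<omega>) \<le> t" and "i < d"
  shows "bdd_above (y i ` A)"
proof (rule bdd_aboveI2)
  fix \<omega> assume "\<omega> \<in> A"
  show "y i \<omega> \<le> max (y i \<omega>0) (t - (\<Sum>j\<in>{..<d} - {i}. y j \<omega>0))"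
  proof (cases "\<forall>j<d. y j \<omega> \<le> y j \<omega>0")
    case True
    then show ?thesis using \<open>i < d\<close> by (simp add: le_max_iff_disj)
  next
    case False
    then have "\<forall>j<d. y j \<omega>0 \<le> y j \<omega>"
      using chain \<open>\<omega> \<in> A\<close> \<open>\<omega>0 \<in> A\<close> by (auto simp: coordinatewise_chain_def)
    then have "(\<Sum>j\<in>{..<d} - {i}. y j \<omega>0) \<le> (\<Sum>j\<in>{..<d} - {i}. y j \<omega>)"
      by (intro sum_mono) auto
    moreover have "(\<Sum>j<d. y j \<omega>) = y i \<omega> + (\<Sum>j\<in>{..<d} - {i}. y j \<omega>)"
      using \<open>i < d\<close> by (simp add: sum.remove)
    ultimately show ?thesis
      using sum_le[OF \<open>\<omega> \<in> A\<close>] by simp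
  qed
qed

lemma coordinatewise_chain_sum_Sup_le:
  assumes chain: "coordinatewise_chain d y A" and "A \<noteq> {}"
    and sum_le: "\<And>\<omega>. \<omega> \<in> A \<Longrightarrow> (\<Sum>i<d. y i \<omega>) \<le> t"
  shows "(\<Sum>i<d. Sup (y i ` A)) \<le> t"
proof (rule field_le_epsilon)
  fix e :: real assume "0 < e"
  show "(\<Sum>i<d. Sup (y i ` A)) \<le> t + e"
  proof (cases "d = 0")
    case True
    then show ?thesis using sum_le \<open>A \<noteq> {}\<close> \<open>0 < e\<close> by auto
  next
    case False
    have "\<exists>\<omega>\<in>A. Sup (y i ` A) - e / d < y i \<omega>" for i
    proof -
      have "Sup (y i ` A) - e / d < Sup (y i ` A)"
        using \<open>0 < e\<close> False by simp
      then show ?thesis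
        using less_cSupD[of "y i ` A"] \<open>A \<noteq> {}\<close> by blast
    qed
    then obtain W where W: "\<And>i. i < d \<Longrightarrow> W i \<in> A \<and> Sup (y i ` A) - e / d < y i (W i)"
      by metis
    obtain \<omega> where "\<omega> \<in> W ` {..<d}" and greatest: "\<forall>\<omega>'\<in>W ` {..<d}. \<forall>i<d. y i \<omega>' \<le> y i \<omega>"
      using coordinatewise_chain_finite_greatest[OF chain, of "W ` {..<d}"] W False by auto
    then have "\<omega> \<in> A"
      using W by auto
    have "(\<Sum>i<d. Sup (y i ` A) - e / d) \<le> (\<Sum>i<d. y i \<omega>)"
      using W greatest by (intro sum_mono) (meson image_eqI lessThan_iff less_imp_le order_trans)
    also have "\<dots> \<le> t"
      using sum_le[OF \<open>\<omega> \<in> A\<close>] .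
    finally show ?thesis
      using False by (simp add: sum_subtractf)
  qed
qed

lemma coordinatewise_chain_sum_Inf_ge:
  assumes chain: "coordinatewise_chain d y B" and "B \<noteq> {}"
    and sum_ge: "\<And>\<omega>. \<omega> \<in> B \<Longrightarrow> t \<le> (\<Sum>i<d. y i \<omega>)"
  shows "t \<le> (\<Sum>i<d. Inf (y i ` B))"
proof -
  have "(\<Sum>i<d. Sup ((\<lambda>\<omega>. - y i \<omega>) ` B)) \<le> - t"
    using sum_ge by (intro coordinatewise_chain_sum_Sup_le coordinatewise_chain_uminus chain \<open>B \<noteq> {}\<close>)
      (simp add: sum_negf)
  then show ?thesis
    by (simp add: Inf_real_def image_image sum_negf)
qed

lemma min_le_segment:
  fixes a b l :: real
  assumes "0 \<le> l" "l \<le> 1"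
  shows "min a b \<le> a + l * (b - a)"
proof (cases "a \<le> b")
  case True
  then show ?thesis using assms by simp
next
  case False
  then have "l * (a - b) \<le> a - b"
    using mult_right_mono[of l 1 "a - b"] assms by simp
  then show ?thesis
    using False by (simp add: algebra_simps)
qed

lemma segment_le_max:
  fixes a b l :: real
  assumes "0 \<le> l" "l \<le> 1"
  shows "a + l * (b - a) \<le> max a b"
  using min_le_segment[OF assms, of "- a" "- b"] by (simp add: algebra_simps)

definition separates :: "nat \<Rightarrow> (nat \<Rightarrow> 'a \<Rightarrow> real) \<Rightarrow> 'a set \<Rightarrow> 'a set \<Rightarrow> (nat \<Rightarrow> real) \<Rightarrow> bool" where
  "separates d y A B \<tau> \<longleftrightarrow> (\<forall>\<omega>\<in>A. \<forall>i<d. y i \<omega> \<le> \<tau> i) \<and> (\<forall>\<omega>\<in>B. \<forall>i<d. \<tau> i \<le> y i \<omega>)"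

lemma separates_segment:
  assumes "separates d y A B \<tau>" "separates d y A B \<sigma>" "0 \<le> l" "l \<le> 1"
  shows "separates d y A B (\<lambda>i. \<tau> i + l * (\<sigma> i - \<tau> i))"
  unfolding separates_def
proof (intro conjI ballI allI impI)
  fix \<omega> i assume "\<omega> \<in> A" "i < d"
  then have "y i \<omega> \<le> min (\<tau> i) (\<sigma> i)"
    using assms by (simp add: separates_def)
  then show "y i \<omega> \<le> \<tau> i + l * (\<sigma> i - \<tau> i)"
    using min_le_segment[OF \<open>0 \<le> l\<close> \<open>l \<le> 1\<close>] by (rule order_trans)
next
  fix \<omega> i assume "\<omega> \<in> B" "i < d"
  then have "max (\<tau> i) (\<sigma> i) \<le> y i \<omega>"
    using assms by (simp add: separates_def)
  then show "\<tau> i + l * (\<sigma> i - \<tau> i) \<le> y i \<omega>"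
    using segment_le_max[OF \<open>0 \<le> l\<close> \<open>l \<le> 1\<close>] by (rule order_trans[rotated])
qed

lemma separates_shift:
  assumes "separates d y A B \<tau>" "A = {} \<or> 0 \<le> c" "B = {} \<or> c \<le> 0"
  shows "separates d y A B (\<lambda>i. \<tau> i + c)"
  using assms unfolding separates_def by (smt (verit, best) empty_iff)

lemma separates_Sup:
  assumes chain: "coordinatewise_chain d y A" and "\<omega>0 \<in> A"
    and sum_le: "\<And>\<omega>. \<omega> \<in> A \<Longrightarrow> (\<Sum>i<d. y i \<omega>) \<le> t"
    and below: "\<And>\<omega> \<omega>' i. \<omega> \<in> A \<Longrightarrow> \<omega>' \<in> B \<Longrightarrow> i < d \<Longrightarrow> y i \<omega> \<le> y i \<omega>'"
  shows "separates d y A B (\<lambda>i. Sup (y i ` A))"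
proof -
  have "bdd_above (y i ` A)" if "i < d" for i
    using chain \<open>\<omega>0 \<in> A\<close> sum_le that by (rule coordinatewise_chain_bdd_above)
  then show ?thesis
    unfolding separates_def using \<open>\<omega>0 \<in> A\<close> below by (auto intro: cSup_upper cSup_least)
qed

lemma separates_Inf:
  assumes chain: "coordinatewise_chain d y B" and "\<omega>0 \<in> B"
    and sum_ge: "\<And>\<omega>. \<omega> \<in> B \<Longrightarrow> t \<le> (\<Sum>i<d. y i \<omega>)"
    and below: "\<And>\<omega> \<omega>' i. \<omega> \<in> A \<Longrightarrow> \<omega>' \<in> B \<Longrightarrow> i < d \<Longrightarrow> y i \<omega> \<le> y i \<omega>'"
  shows "separates d y A B (\<lambda>i. Inf (y i ` B))"
proof -
  have "separates d (\<lambda>i \<omega>. - y i \<omega>) B A (\<lambda>i. Sup ((\<lambda>\<omega>. - y i \<omega>) ` B))"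
    using coordinatewise_chain_uminus[OF chain] \<open>\<omega>0 \<in> B\<close>
  proof (rule separates_Sup[where t = "- t"])
    show "(\<Sum>i<d. - y i \<omega>) \<le> - t" if "\<omega> \<in> B" for \<omega>
      using sum_ge[OF that] by (simp add: sum_negf)
  qed (use below in auto)
  then show ?thesis
    by (auto simp: separates_def Inf_real_def image_image minus_le_iff le_minus_iff)
qed

lemma coordinatewise_chain_threshold:
  assumes chain: "coordinatewise_chain d y G" and "0 < d"
  obtains \<tau> where "(\<Sum>i<d. \<tau> i) = t"
    and "\<And>\<omega>. \<omega> \<in> G \<Longrightarrow> (\<forall>i<d. y i \<omega> \<le> \<tau> i) \<or> (\<forall>i<d. \<tau> i \<le> y i \<omega>)"
proof -
  define A where "A = {\<omega>\<in>G. (\<Sum>i<d. y i \<omega>) \<le> t}"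
  define B where "B = {\<omega>\<in>G. t < (\<Sum>i<d. y i \<omega>)}"
  have chain_A: "coordinatewise_chain d y A" and chain_B: "coordinatewise_chain d y B"
    using chain by (auto simp: A_def B_def intro: coordinatewise_chain_subset)
  have A_le_B: "y i \<omega> \<le> y i \<omega>'" if "\<omega> \<in> A" "\<omega>' \<in> B" "i < d" for \<omega> \<omega>' i
    using that by (intro coordinatewise_chain_le_of_sum_le[OF chain]) (auto simp: A_def B_def)
  define a where "a i = Sup (y i ` A)" for i
  define b where "b i = Inf (y i ` B)" for i
  have a: "separates d y A B a" "(\<Sum>i<d. a i) \<le> t" if "A \<noteq> {}"
    using that chain_A A_le_B unfolding a_def
    by (auto intro: separates_Sup[where t = t] coordinatewise_chain_sum_Sup_le simp: A_def)
  have b: "separates d y A B b" "t \<le> (\<Sum>i<d. b i)" if "B \<noteq> {}"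
    using that chain_B A_le_B unfolding b_def
    by (auto intro: separates_Inf[where t = t] coordinatewise_chain_sum_Inf_ge simp: B_def)
  have "\<exists>\<tau>. separates d y A B \<tau> \<and> (\<Sum>i<d. \<tau> i) = t"
  proof (cases "A = {} \<or> B = {}")
    case True
    define \<tau> where "\<tau> = (if A \<noteq> {} then a else if B \<noteq> {} then b else (\<lambda>_. 0))"
    have "separates d y A B \<tau>" "A = {} \<or> (\<Sum>i<d. \<tau> i) \<le> t" "B = {} \<or> t \<le> (\<Sum>i<d. \<tau> i)"
      using a b True by (auto simp: \<tau>_def separates_def)
    then have "separates d y A B (\<lambda>i. \<tau> i + (t - (\<Sum>i<d. \<tau> i)) / d)"
      using \<open>0 < d\<close> by (intro separates_shift) (auto simp: zero_le_divide_iff divide_le_0_iff)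
    moreover have "(\<Sum>i<d. \<tau> i + (t - (\<Sum>i<d. \<tau> i)) / d) = t"
      using \<open>0 < d\<close> by (simp add: sum.distrib)
    ultimately show ?thesis
      by blast
  next
    case False
    define l where "l = (if (\<Sum>i<d. a i) < (\<Sum>i<d. b i)
      then (t - (\<Sum>i<d. a i)) / ((\<Sum>i<d. b i) - (\<Sum>i<d. a i)) else 0)"
    have "0 \<le> l" "l \<le> 1"
      using a(2) b(2) False by (auto simp: l_def field_simps)
    have "(\<Sum>i<d. a i + l * (b i - a i)) = (\<Sum>i<d. a i) + l * ((\<Sum>i<d. b i) - (\<Sum>i<d. a i))"
      by (simp add: sum.distrib sum_subtractf flip: sum_distrib_left)
    also have "\<dots> = t"
      using a(2) b(2) False by (auto simp: l_def)
    finally show ?thesis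
      using separates_segment[OF a(1) b(1) \<open>0 \<le> l\<close> \<open>l \<le> 1\<close>] False by blast
  qed
  then obtain \<tau> where "separates d y A B \<tau>" "(\<Sum>i<d. \<tau> i) = t"
    by blast
  then show ?thesis
  proof (intro that[of \<tau>])
    fix \<omega> assume "\<omega> \<in> G"
    then show "(\<forall>i<d. y i \<omega> \<le> \<tau> i) \<or> (\<forall>i<d. \<tau> i \<le> y i \<omega>)"
      using \<open>separates d y A B \<tau>\<close>
      by (cases "(\<Sum>i<d. y i \<omega>) \<le> t") (auto simp: separates_def A_def B_def)
  qed
qed

definition concordant_on :: "'a set \<Rightarrow> ('a \<Rightarrow> real) \<Rightarrow> ('a \<Rightarrow> real) \<Rightarrow> bool" where
  "concordant_on G U V \<longleftrightarrow> (\<forall>\<omega>\<in>G. \<forall>\<omega>'\<in>G. 0 \<le> (U \<omega> - U \<omega>') * (V \<omega> - V \<omega>'))"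

lemma comonotonic_pair_AE_concordant:
  assumes "comonotonic_pair M U V"
  shows "\<exists>G. (AE \<omega> in M. \<omega> \<in> G) \<and> concordant_on G U V"
proof -
  obtain Z :: "'a \<Rightarrow> real" and f g where "mono f" "mono g" and AE: "AE \<omega> in M. U \<omega> = f (Z \<omega>) \<and> V \<omega> = g (Z \<omega>)"
    using assms unfolding comonotonic_pair_def by blast
  define G where "G = {\<omega>. U \<omega> = f (Z \<omega>) \<and> V \<omega> = g (Z \<omega>)}"
  have "concordant_on G U V"
    unfolding concordant_on_def
  proof (intro ballI)
    fix \<omega> \<omega>' assume "\<omega> \<in> G" "\<omega>' \<in> G"
    have U: "U \<omega> = f (Z \<omega>)" "U \<omega>' = f (Z \<omega>')" and V: "V \<omega> = g (Z \<omega>)" "V \<omega>' = g (Z \<omega>')"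
      using \<open>\<omega> \<in> G\<close> \<open>\<omega>' \<in> G\<close> by (simp_all add: G_def)
    show "0 \<le> (U \<omega> - U \<omega>') * (V \<omega> - V \<omega>')"
    proof (cases "Z \<omega> \<le> Z \<omega>'")
      case True
      then show ?thesis
        unfolding U V using monoD[OF \<open>mono f\<close>] monoD[OF \<open>mono g\<close>] by (simp add: mult_nonpos_nonpos)
    next
      case False
      then show ?thesis
        unfolding U V using monoD[OF \<open>mono f\<close>] monoD[OF \<open>mono g\<close>] by (simp add: mult_nonneg_nonneg)
    qed
  qed
  moreover have "AE \<omega> in M. \<omega> \<in> G"
    using AE by (simp add: G_def)
  ultimately show ?thesis
    by blast
qed

lemma comonotonic_vec_AE_chain:
  assumes "comonotonic_vec M d Y"
  obtains G where "AE \<omega> in M. \<omega> \<in> G" and "coordinatewise_chain d Y G"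
proof -
  define H where "H i j = (SOME G. (AE \<omega> in M. \<omega> \<in> G) \<and> concordant_on G (Y i) (Y j))" for i j
  have H: "(AE \<omega> in M. \<omega> \<in> H i j) \<and> concordant_on (H i j) (Y i) (Y j)" if "i < d" "j < d" for i j
    unfolding H_def using assms that
    by (intro someI_ex[OF comonotonic_pair_AE_concordant]) (simp add: comonotonic_vec_def)
  define G where "G = {\<omega>. \<forall>i\<in>{..<d}. \<forall>j\<in>{..<d}. \<omega> \<in> H i j}"
  have "AE \<omega> in M. \<omega> \<in> G"
    unfolding G_def mem_Collect_eq using H by (intro AE_finite_allI) auto
  moreover have "coordinatewise_chain d Y G"
    unfolding coordinatewise_chain_def
  proof (intro ballI)
    fix \<omega> \<omega>' assume "\<omega> \<in> G" "\<omega>' \<in> G"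
    then have concordant: "0 \<le> (Y i \<omega> - Y i \<omega>') * (Y j \<omega> - Y j \<omega>')" if "i < d" "j < d" for i j
      using H[OF that] that by (auto simp: G_def concordant_on_def)
    show "(\<forall>i<d. Y i \<omega> \<le> Y i \<omega>') \<or> (\<forall>i<d. Y i \<omega>' \<le> Y i \<omega>)"
    proof (cases "\<exists>k<d. Y k \<omega> < Y k \<omega>'")
      case True
      then obtain k where "k < d" "Y k \<omega> < Y k \<omega>'"
        by blast
      then have "Y j \<omega> \<le> Y j \<omega>'" if "j < d" for j
        using concordant[OF \<open>k < d\<close> that] by (simp add: zero_le_mult_iff)
      then show ?thesis
        by blast
    next
      case False
      then have "\<forall>i<d. Y i \<omega>' \<le> Y i \<omega>"
        using not_less by blast
      then show ?thesis
        by blast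
    qed
  qed
  ultimately show ?thesis
    by (rule that)
qed

lemma comonotonic_vec_AE_threshold:
  assumes "comonotonic_vec M d Y" "0 < d"
  shows "\<exists>\<tau>. (\<Sum>i<d. \<tau> i) = t \<and> (AE \<omega> in M. (\<forall>i<d. Y i \<omega> \<le> \<tau> i) \<or> (\<forall>i<d. \<tau> i \<le> Y i \<omega>))"
proof -
  obtain G where "AE \<omega> in M. \<omega> \<in> G" and chain: "coordinatewise_chain d Y G"
    using assms(1) by (rule comonotonic_vec_AE_chain)
  obtain \<tau> where "(\<Sum>i<d. \<tau> i) = t"
    and comparable: "\<And>\<omega>. \<omega> \<in> G \<Longrightarrow> (\<forall>i<d. Y i \<omega> \<le> \<tau> i) \<or> (\<forall>i<d. \<tau> i \<le> Y i \<omega>)"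
    using coordinatewise_chain_threshold[OF chain \<open>0 < d\<close>] by blast
  moreover have "AE \<omega> in M. (\<forall>i<d. Y i \<omega> \<le> \<tau> i) \<or> (\<forall>i<d. \<tau> i \<le> Y i \<omega>)"
    using \<open>AE \<omega> in M. \<omega> \<in> G\<close> by eventually_elim (rule comparable)
  ultimately show ?thesis
    by blast
qed

lemma nn_integral_eq_of_distr_eq:
  assumes [measurable]: "X \<in> borel_measurable M" "Y \<in> borel_measurable M" "g \<in> borel_measurable borel"
    and "distr M borel Y = distr M borel X"
  shows "(\<integral>\<^sup>+x. g (Y x) \<partial>M) = (\<integral>\<^sup>+x. g (X x) \<partial>M)"
proof -
  have "(\<integral>\<^sup>+x. g (Y x) \<partial>M) = (\<integral>\<^sup>+z. g z \<partial>distr M borel Y)"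
    by (rule nn_integral_distr[symmetric]) auto
  also have "\<dots> = (\<integral>\<^sup>+x. g (X x) \<partial>M)"
    unfolding assms(4) by (rule nn_integral_distr) auto
  finally show ?thesis .
qed

lemma pos_part_sum_le: "max (\<Sum>i\<in>I. f i) 0 \<le> (\<Sum>i\<in>I. max (f i) (0::real))"
  by (simp add: sum_mono sum_nonneg)

lemma pos_part_sum_eq:
  assumes "(\<forall>i\<in>I. f i \<le> 0) \<or> (\<forall>i\<in>I. 0 \<le> f i)"
  shows "max (\<Sum>i\<in>I. f i) 0 = (\<Sum>i\<in>I. max (f i) (0::real))"
  using assms by (auto simp: sum_nonpos sum_nonneg intro!: sum.cong)

lemma stop_loss_sum_le_of_threshold:
  fixes X Y :: "nat \<Rightarrow> 'a \<Rightarrow> real"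
  assumes [measurable]: "\<And>i. i < d \<Longrightarrow> X i \<in> borel_measurable M" "\<And>i. i < d \<Longrightarrow> Y i \<in> borel_measurable M"
    and law: "\<And>i. i < d \<Longrightarrow>
      (\<integral>\<^sup>+x. ennreal (max (X i x - \<tau> i) 0) \<partial>M) = (\<integral>\<^sup>+x. ennreal (max (Y i x - \<tau> i) 0) \<partial>M)"
    and sum_\<tau>: "(\<Sum>i<d. \<tau> i) = t"
    and comparable: "AE \<omega> in M. (\<forall>i<d. Y i \<omega> \<le> \<tau> i) \<or> (\<forall>i<d. \<tau> i \<le> Y i \<omega>)"
  shows "(\<integral>\<^sup>+x. ennreal (max ((\<Sum>i<d. X i x) - t) 0) \<partial>M)
       \<le> (\<integral>\<^sup>+x. ennreal (max ((\<Sum>i<d. Y i x) - t) 0) \<partial>M)"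
proof -
  have centered: "(\<Sum>i<d. U i x) - t = (\<Sum>i<d. U i x - \<tau> i)" for U :: "nat \<Rightarrow> 'a \<Rightarrow> real" and x
    using sum_\<tau> by (simp add: sum_subtractf)
  have split: "ennreal (\<Sum>i<d. max (U i x - \<tau> i) 0) = (\<Sum>i<d. ennreal (max (U i x - \<tau> i) 0))"
    for U :: "nat \<Rightarrow> 'a \<Rightarrow> real" and x
    by (rule sum_ennreal[symmetric]) auto
  have "(\<integral>\<^sup>+x. ennreal (max ((\<Sum>i<d. X i x) - t) 0) \<partial>M)
      \<le> (\<integral>\<^sup>+x. (\<Sum>i<d. ennreal (max (X i x - \<tau> i) 0)) \<partial>M)"
    unfolding centered split[symmetric] by (intro nn_integral_mono ennreal_leI pos_part_sum_le)
  also have "\<dots> = (\<Sum>i<d. \<integral>\<^sup>+x. ennreal (max (X i x - \<tau> i) 0) \<partial>M)"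
    by (rule nn_integral_sum) auto
  also have "\<dots> = (\<Sum>i<d. \<integral>\<^sup>+x. ennreal (max (Y i x - \<tau> i) 0) \<partial>M)"
    using law by simp
  also have "\<dots> = (\<integral>\<^sup>+x. (\<Sum>i<d. ennreal (max (Y i x - \<tau> i) 0)) \<partial>M)"
    by (rule nn_integral_sum[symmetric]) auto
  also have "\<dots> = (\<integral>\<^sup>+x. ennreal (max ((\<Sum>i<d. Y i x) - t) 0) \<partial>M)"
  proof -
    have "AE x in M. ennreal (\<Sum>i<d. max (Y i x - \<tau> i) 0) = ennreal (max (\<Sum>i<d. Y i x - \<tau> i) 0)"
      using comparable by eventually_elim (subst pos_part_sum_eq, auto)
    then show ?thesis
      unfolding centered split[symmetric] by (rule nn_integral_cong_AE)
  qed
  finally show ?thesis .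
qed

lemma stop_loss_le_comonotonic_sum:
  assumes X: "\<And>i. i < d \<Longrightarrow> X i \<in> borel_measurable M" and "comonotonic_version M d X Y"
  shows "stop_loss_le M (\<lambda>\<omega>. \<Sum>i<d. X i \<omega>) (\<lambda>\<omega>. \<Sum>i<d. Y i \<omega>)"
    and "stop_loss_le M (\<lambda>\<omega>. - (\<Sum>i<d. X i \<omega>)) (\<lambda>\<omega>. - (\<Sum>i<d. Y i \<omega>))"
proof -
  have Y: "\<And>i. i < d \<Longrightarrow> Y i \<in> borel_measurable M"
    and law: "\<And>i. i < d \<Longrightarrow> distr M borel (Y i) = distr M borel (X i)"
    and como: "comonotonic_vec M d Y"
    using assms(2) by (auto simp: comonotonic_version_def)
  show "stop_loss_le M (\<lambda>\<omega>. \<Sum>i<d. X i \<omega>) (\<lambda>\<omega>. \<Sum>i<d. Y i \<omega>)"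
    unfolding stop_loss_le_def
  proof (intro allI)
    fix t
    show "(\<integral>\<^sup>+x. ennreal (max ((\<Sum>i<d. X i x) - t) 0) \<partial>M) \<le> (\<integral>\<^sup>+x. ennreal (max ((\<Sum>i<d. Y i x) - t) 0) \<partial>M)"
    proof (cases "d = 0")
      case False
      then obtain \<tau> where "(\<Sum>i<d. \<tau> i) = t" "AE \<omega> in M. (\<forall>i<d. Y i \<omega> \<le> \<tau> i) \<or> (\<forall>i<d. \<tau> i \<le> Y i \<omega>)"
        using comonotonic_vec_AE_threshold[OF como] by blast
      then show ?thesis
        using X Y law by (intro stop_loss_sum_le_of_threshold nn_integral_eq_of_distr_eq[symmetric]) auto
    qed simp
  qed
  show "stop_loss_le M (\<lambda>\<omega>. - (\<Sum>i<d. X i \<omega>)) (\<lambda>\<omega>. - (\<Sum>i<d. Y i \<omega>))"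
    unfolding stop_loss_le_def
  proof (intro allI)
    fix t
    show "(\<integral>\<^sup>+x. ennreal (max (- (\<Sum>i<d. X i x) - t) 0) \<partial>M) \<le> (\<integral>\<^sup>+x. ennreal (max (- (\<Sum>i<d. Y i x) - t) 0) \<partial>M)"
    proof (cases "d = 0")
      case False
      then obtain \<tau> where "(\<Sum>i<d. \<tau> i) = - t" "AE \<omega> in M. (\<forall>i<d. Y i \<omega> \<le> \<tau> i) \<or> (\<forall>i<d. \<tau> i \<le> Y i \<omega>)"
        using comonotonic_vec_AE_threshold[OF como] by blast
      then have "(\<integral>\<^sup>+x. ennreal (max ((\<Sum>i<d. - X i x) - t) 0) \<partial>M) \<le> (\<integral>\<^sup>+x. ennreal (max ((\<Sum>i<d. - Y i x) - t) 0) \<partial>M)"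
        using X Y law
        by (intro stop_loss_sum_le_of_threshold[where \<tau> = "\<lambda>i. - \<tau> i"] nn_integral_eq_of_distr_eq[symmetric])
          (auto simp: sum_negf elim!: AE_mp)
      then show ?thesis
        by (simp add: sum_negf)
    qed simp
  qed
qed

theorem theorem5:
  fixes M :: "'a measure" and d :: nat and X Y :: "nat \<Rightarrow> 'a \<Rightarrow> real"
  assumes "prob_space M"
    and "atomless M"
    and "\<And>i. i < d \<Longrightarrow> X i \<in> borel_measurable M"
    and "comonotonic_version M d X Y"
  shows "cx_le M (\<lambda>\<omega>. \<Sum>i<d. X i \<omega>) (\<lambda>\<omega>. \<Sum>i<d. Y i \<omega>)"
  unfolding cx_le_def
proof (intro allI impI)
  \<comment> \<open>Atomlessness only matters for the existence of a comonotonic version, which is given.\<close>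
  interpret prob_space M by fact
  fix u :: "real \<Rightarrow> real"
  assume "convex_on UNIV u" "exp_well_defined M (\<lambda>\<omega>. u (\<Sum>i<d. X i \<omega>))" "exp_well_defined M (\<lambda>\<omega>. u (\<Sum>i<d. Y i \<omega>))"
  moreover have "(\<lambda>\<omega>. \<Sum>i<d. X i \<omega>) \<in> borel_measurable M" "(\<lambda>\<omega>. \<Sum>i<d. Y i \<omega>) \<in> borel_measurable M"
    using assms(3,4) by (auto simp: comonotonic_version_def intro!: borel_measurable_sum)
  ultimately show "ext_expectation M (\<lambda>\<omega>. u (\<Sum>i<d. X i \<omega>)) \<le> ext_expectation M (\<lambda>\<omega>. u (\<Sum>i<d. Y i \<omega>))"
    using stop_loss_le_comonotonic_sum[OF assms(3,4)] by (intro ext_expectation_mono_convex) auto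
qed

end
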